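(* Let $\sigma^2>0$, $a>1$, let $Z_i$ be i.i.d. $\mathcal{N}(0,\sigma^2)$, $U_0=0$, $U_i=aU_{i-1}+Z_i$, and $\hat a_{\mathrm{ML}}(u_1^n)=\frac{\sum_{i=1}^{n-1}u_iu_{i+1}}{\sum_{i=1}^{n-1}u_i^2}$. Define $P^+(n,a,\eta)=-\frac1n\log\mathbb{P}[\hat a_{\mathrm{ML}}(U_1^n)-a>\eta]$, $P^-(n,a,\eta)=-\frac1n\log\mathbb{P}[\hat a_{\mathrm{ML}}(U_1^n)-a<-\eta]$, $P(n,a,\eta)=-\frac1n\log\mathbb{P}[|\hat a_{\mathrm{ML}}(U_1^n)-a|>\eta]$. Then for every constant $\eta>0$, $$\liminf_{n\to\infty}P^+(n,a,\eta)\ge\log(a+2\eta),\quad \liminf_{n\to\infty}P^-(n,a,\eta)\ge I^-(a,\eta),\quad \liminf_{n\to\infty}P(n,a,\eta)\ge I^-(a,\eta),$$ where, with $\eta_1=\frac{a^2-1}{a}$ and $\eta_2=\frac{3a+\sqrt{a^2+8}}{4}$, $$I^-(a,\eta)=\begin{cases}\log a,&0<\eta\le\eta_1,\\ \frac12\log\frac{2a\eta-(a^2-1)}{1-(\eta-a)^2},&\eta_1<\eta<\eta_2,\\ \log(2\eta-a),&\eta\ge\eta_2.\end{cases}$$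
   Context: Logarithms are natural. *)

theory Defs
  imports "HOL-Probability.Probability"
begin

fun AR_U :: "real \<Rightarrow> (nat \<Rightarrow> 'a \<Rightarrow> real) \<Rightarrow> nat \<Rightarrow> 'a \<Rightarrow> real" where
  "AR_U a Z 0 \<omega> = 0"
| "AR_U a Z (Suc i) \<omega> = a * AR_U a Z i \<omega> + Z (Suc i) \<omega>"

definition a_ML :: "(nat \<Rightarrow> real) \<Rightarrow> nat \<Rightarrow> real" where
  "a_ML u n = (\<Sum>i=1..n-1. u i * u (i+1)) / (\<Sum>i=1..n-1. (u i)^2)"

definition I_minus :: "real \<Rightarrow> real \<Rightarrow> real" where
  "I_minus a \<eta> =
    (let \<eta>1 = (a^2 - 1) / a; \<eta>2 = (3*a + sqrt (a^2 + 8)) / 4 in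
     if \<eta> \<le> \<eta>1 then ln a
     else if \<eta> < \<eta>2 then (1/2) * ln ((2*a*\<eta> - (a^2 - 1)) / (1 - (\<eta> - a)^2))
     else ln (2*\<eta> - a))"

end

theory Submission
  imports Defs
begin

(*
  Chernoff bound with innovations integrated out one at a time. With u = AR path and
  x = innovations, the events a_ML - a > eta and a_ML - a < -eta lie in {V >= 0} for
  V = sum_i (s * u_i * x_(i+1) - r * u_i^2), with (s, r) = (t, t*eta) resp. (-t, t*eta), t > 0.
  Since u_i only depends on x_1, ..., x_i, the moment E exp (V + c * u_m^2) is computed by
  integrating out x_m: the Gaussian integral gives a factor (1 - 2c)^(-1/2) and replaces c by
  a Riccati update riccati c. If the quadratic riccati_poly is negative at 1 and at D > 1,
  then riccati lowers c by a fixed amount until c reaches (1 - D)/2, where it stays, and from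
  then on every step contributes D^(-1/2). Hence both tails are O(D^(-n/2)), i.e. have rate
  (ln D)/2, and choosing t optimally gives ln (a + 2 eta) and I_minus a eta.
  Because ln 0 = 0 in HOL, the events must also have positive probability; this holds since
  they contain the paths that grow geometrically at a suitable rate. As the estimator is
  invariant under scaling of the path, the innovations are first normalised to unit variance.
*)

section \<open>Gaussian exponential moments\<close>

lemma nn_integral_normal_density:
  assumes "0 < \<sigma>"
  shows "(\<integral>\<^sup>+x. normal_density \<mu> \<sigma> x \<partial>lborel) = 1"
proof -
  interpret prob_space "density lborel (normal_density \<mu> \<sigma>)"
    using assms by (rule prob_space_normal_density)
  show ?thesis
    using emeasure_space_1 by (simp add: emeasure_density)
qed

lemma std_normal_density_mult_exp_quadratic:
  fixes \<alpha> \<beta> y :: real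
  assumes "0 < 1 - 2*\<alpha>"
  shows "std_normal_density y * exp (\<alpha>*y^2 + \<beta>*y) =
    (1 - 2*\<alpha>) powr (-1/2) * exp (\<beta>^2 / (2*(1 - 2*\<alpha>))) *
    normal_density (\<beta>/(1 - 2*\<alpha>)) (1 / sqrt (1 - 2*\<alpha>)) y"
proof -
  define d where "d = 1 - 2*\<alpha>"
  have "0 < d" and \<alpha>: "\<alpha> = (1 - d)/2"
    using assms unfolding d_def by simp_all
  have "- ((y - 0)^2) / (2*1^2) + (\<alpha>*y^2 + \<beta>*y) = \<beta>^2/(2*d) + - ((y - \<beta>/d)^2) / (2*(1 / sqrt d)^2)"
    using \<open>0 < d\<close> unfolding \<alpha> by (simp add: field_simps power2_eq_square power_divide)
  then have "std_normal_density y * exp (\<alpha>*y^2 + \<beta>*y) =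
      1 / sqrt (2*pi) * exp (\<beta>^2/(2*d)) * exp (- ((y - \<beta>/d)^2) / (2*(1 / sqrt d)^2))"
    unfolding normal_density_def by (simp add: exp_add[symmetric])
  also have "\<dots> = d powr (-1/2) * exp (\<beta>^2/(2*d)) * normal_density (\<beta>/d) (1 / sqrt d) y"
    using \<open>0 < d\<close>
    by (simp add: normal_density_def powr_minus_divide powr_half_sqrt power_divide real_sqrt_divide
        real_sqrt_mult)
  finally show ?thesis
    unfolding d_def .
qed

lemma nn_integral_exp_quadratic_std_normal:
  fixes \<alpha> \<beta> :: real
  assumes "0 < 1 - 2*\<alpha>"
  shows "(\<integral>\<^sup>+y. exp (\<alpha>*y^2 + \<beta>*y) \<partial>std_normal_distribution) =
    (1 - 2*\<alpha>) powr (-1/2) * exp (\<beta>^2 / (2*(1 - 2*\<alpha>)))"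
proof -
  have "(\<integral>\<^sup>+y. exp (\<alpha>*y^2 + \<beta>*y) \<partial>std_normal_distribution)
      = (\<integral>\<^sup>+y. ennreal ((1 - 2*\<alpha>) powr (-1/2) * exp (\<beta>^2 / (2*(1 - 2*\<alpha>)))) *
        normal_density (\<beta>/(1 - 2*\<alpha>)) (1 / sqrt (1 - 2*\<alpha>)) y \<partial>lborel)"
    using std_normal_density_mult_exp_quadratic[of \<alpha>] assms
    by (auto simp: nn_integral_density ennreal_mult'[symmetric] intro!: nn_integral_cong)
  also have "\<dots> = (1 - 2*\<alpha>) powr (-1/2) * exp (\<beta>^2 / (2*(1 - 2*\<alpha>)))"
    using assms by (simp add: nn_integral_cmult nn_integral_normal_density)
  finally show ?thesis .
qed

lemma emeasure_std_normal_interval_ge: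
  assumes "p < q" "\<bar>p\<bar> \<le> K" "\<bar>q\<bar> \<le> K"
  shows "ennreal ((q - p) * std_normal_density K) \<le> emeasure std_normal_distribution {p<..<q}"
proof -
  have "std_normal_density K \<le> std_normal_density y" if "y \<in> {p<..<q}" for y
  proof -
    have "y^2 \<le> K^2"
      using that assms by (intro abs_le_square_iff[THEN iffD1]) auto
    then show ?thesis
      unfolding normal_density_def by (intro mult_left_mono) (auto simp: divide_right_mono)
  qed
  then have "ennreal (std_normal_density K) * emeasure lborel {p<..<q}
      \<le> (\<integral>\<^sup>+y. ennreal (std_normal_density y) * indicator {p<..<q} y \<partial>lborel)"
    by (subst nn_integral_cmult_indicator[symmetric])
       (auto intro!: nn_integral_mono split: split_indicator)
  then show ?thesis
    using assms(1) by (simp add: emeasure_density ennreal_mult'[symmetric] mult.commute)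
qed

section \<open>Paths of the autoregression\<close>

fun ar_path :: "real \<Rightarrow> (nat \<Rightarrow> real) \<Rightarrow> nat \<Rightarrow> real" where
  "ar_path a x 0 = 0"
| "ar_path a x (Suc i) = a * ar_path a x i + x (Suc i)"

lemma AR_U_eq_ar_path: "AR_U a Z i \<omega> = ar_path a (\<lambda>j. Z j \<omega>) i"
  by (induction i) simp_all

lemma ar_path_cong: "(\<And>j. j \<in> {1..i} \<Longrightarrow> x j = x' j) \<Longrightarrow> ar_path a x i = ar_path a x' i"
  by (induction i) auto

lemma ar_path_fun_upd: "i \<le> m \<Longrightarrow> ar_path a (x(Suc m := y)) i = ar_path a x i"
  by (rule ar_path_cong) auto

lemma measurable_ar_path:
  "{1..i} \<subseteq> I \<Longrightarrow> (\<lambda>x. ar_path a x i) \<in> borel_measurable (PiM I (\<lambda>_. std_normal_distribution))"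
proof (induction i)
  case (Suc i)
  then have "{1..i} \<subseteq> I" "Suc i \<in> I"
    by auto
  with Suc.IH have [measurable]:
    "(\<lambda>x. ar_path a x i) \<in> borel_measurable (PiM I (\<lambda>_. std_normal_distribution))"
    by blast
  from \<open>Suc i \<in> I\<close> show ?case
    by simp
qed simp

definition chernoff_exponent :: "real \<Rightarrow> real \<Rightarrow> real \<Rightarrow> (nat \<Rightarrow> real) \<Rightarrow> nat \<Rightarrow> real" where
  "chernoff_exponent a s r x m = (\<Sum>i<m. s * ar_path a x i * x (Suc i) - r * (ar_path a x i)^2)"

lemma chernoff_exponent_cong:
  "(\<And>j. j \<in> {1..m} \<Longrightarrow> x j = x' j) \<Longrightarrow> chernoff_exponent a s r x m = chernoff_exponent a s r x' m"
  unfolding chernoff_exponent_def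
  by (intro sum.cong refl arg_cong2[where f = "(-)"] arg_cong2[where f = "(*)"] ar_path_cong
      arg_cong[where f = "\<lambda>v. v^2"]) auto

lemma chernoff_exponent_fun_upd:
  "chernoff_exponent a s r (x(Suc m := y)) (Suc m) =
    chernoff_exponent a s r x m + s * ar_path a x m * y - r * (ar_path a x m)^2"
proof -
  have "chernoff_exponent a s r (x(Suc m := y)) m = chernoff_exponent a s r x m"
    by (rule chernoff_exponent_cong) auto
  then show ?thesis
    unfolding chernoff_exponent_def by (simp add: ar_path_fun_upd)
qed

lemma chernoff_exponent_eq_ml_sums:
  "chernoff_exponent a s r x n = s * (\<Sum>i=1..n-1. ar_path a x i * ar_path a x (i+1))
    - (s*a + r) * (\<Sum>i=1..n-1. (ar_path a x i)^2)"
proof -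
  define f where
    "f i = s * (ar_path a x i * ar_path a x (i+1)) - (s*a + r) * (ar_path a x i)^2" for i
  have "chernoff_exponent a s r x n = (\<Sum>i<n. f i)"
    unfolding chernoff_exponent_def f_def
    by (intro sum.cong refl) (simp add: algebra_simps power2_eq_square)
  also have "\<dots> = (\<Sum>i=1..n-1. f i)"
  proof (intro sum.mono_neutral_right ballI)
    fix i assume "i \<in> {..<n} - {1..n-1}"
    then have "i = 0"
      by auto
    then show "f i = 0"
      by (simp add: f_def)
  qed auto
  finally show ?thesis
    unfolding f_def by (simp add: sum_subtractf sum_distrib_left)
qed

lemma measurable_exp_chernoff_exponent:
  assumes "{1..m} \<subseteq> I"
  shows "(\<lambda>x. exp (chernoff_exponent a s r x m + c * (ar_path a x m)^2))
    \<in> borel_measurable (PiM I (\<lambda>_. std_normal_distribution))"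
proof -
  have [measurable]: "(\<lambda>x. ar_path a x i) \<in> borel_measurable (PiM I (\<lambda>_. std_normal_distribution))"
    if "i \<le> m" for i
    using assms that by (intro measurable_ar_path) auto
  have [measurable]: "Suc i \<in> I" if "i < m" for i
    using assms that by auto
  show ?thesis
    unfolding chernoff_exponent_def by measurable
qed

lemma ml_sum_products_eq_0:
  fixes u :: "nat \<Rightarrow> real"
  assumes "(\<Sum>i=1..n-1. (u i)^2) = 0"
  shows "(\<Sum>i=1..n-1. u i * u (i+1)) = 0"
  using assms by (intro sum.neutral) (simp add: sum_nonneg_eq_0_iff)

lemma chernoff_exponent_nonneg_if_ratio:
  assumes "0 \<le> s * (a_ML (ar_path a x) n - \<theta>)"
  shows "0 \<le> chernoff_exponent a s (s * (\<theta> - a)) x n"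
proof -
  define A where "A = (\<Sum>i=1..n-1. ar_path a x i * ar_path a x (i+1))"
  define B where "B = (\<Sum>i=1..n-1. (ar_path a x i)^2)"
  have V: "chernoff_exponent a s (s * (\<theta> - a)) x n = s * (A - \<theta> * B)"
    unfolding chernoff_exponent_eq_ml_sums A_def B_def by (simp add: algebra_simps)
  show ?thesis
  proof (cases "B = 0")
    case True
    then have "A = 0"
      unfolding A_def B_def by (rule ml_sum_products_eq_0)
    with True V show ?thesis
      by simp
  next
    case False
    then have "0 < B"
      unfolding B_def by (simp add: order.not_eq_order_implies_strict sum_nonneg)
    with assms have "0 \<le> B * (s * (A / B - \<theta>))"
      unfolding a_ML_def A_def[symmetric] B_def[symmetric] by simp
    also have "B * (s * (A / B - \<theta>)) = s * (A - \<theta> * B)"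
      using \<open>0 < B\<close> by (simp add: field_simps)
    finally show ?thesis
      unfolding V .
  qed
qed

section \<open>The exponential moment of the Chernoff exponent\<close>

abbreviation innovations_law :: "nat \<Rightarrow> (nat \<Rightarrow> real) measure" where
  "innovations_law m \<equiv> PiM {1..m} (\<lambda>_. std_normal_distribution)"

interpretation std_normal_product: product_sigma_finite "\<lambda>_::nat. std_normal_distribution"
  by (intro product_sigma_finite.intro prob_space_imp_sigma_finite prob_space_normal_density) simp

definition exp_moment :: "real \<Rightarrow> real \<Rightarrow> real \<Rightarrow> nat \<Rightarrow> real \<Rightarrow> ennreal" where
  "exp_moment a s r m c =
    (\<integral>\<^sup>+x. exp (chernoff_exponent a s r x m + c * (ar_path a x m)^2) \<partial>innovations_law m)"

text \<open>Completing the square in the Gaussian integral over the last innovation turns the weight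
  \<open>exp (c * u\<^sub>m\<^sup>2)\<close> into \<open>exp (riccati a s r c * u\<^sub>m\<^sub>-\<^sub>1\<^sup>2)\<close>.\<close>
definition riccati :: "real \<Rightarrow> real \<Rightarrow> real \<Rightarrow> real \<Rightarrow> real" where
  "riccati a s r c = c * a^2 - r + (2*c*a + s)^2 / (2 * (1 - 2*c))"

lemma exp_moment_0: "exp_moment a s r 0 c = 1"
  by (simp add: exp_moment_def PiM_empty chernoff_exponent_def)

lemma exp_moment_mono: "c \<le> c' \<Longrightarrow> exp_moment a s r m c \<le> exp_moment a s r m c'"
  unfolding exp_moment_def by (intro nn_integral_mono) (simp add: mult_right_mono)

lemma exp_moment_Suc:
  assumes "c < 1/2"
  shows "exp_moment a s r (Suc m) c = (1 - 2*c) powr (-1/2) * exp_moment a s r m (riccati a s r c)"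
proof -
  let ?V = "\<lambda>x. chernoff_exponent a s r x m" and ?u = "\<lambda>x. ar_path a x m"
  have split:
    "chernoff_exponent a s r (x(Suc m := y)) (Suc m) + c * (ar_path a (x(Suc m := y)) (Suc m))^2
      = (?V x + (c*a^2 - r) * (?u x)^2) + (c*y^2 + ((2*c*a + s) * ?u x) * y)" for x y
    by (simp add: chernoff_exponent_fun_upd ar_path_fun_upd power2_eq_square algebra_simps)
  have gauss: "(\<integral>\<^sup>+y. exp (c*y^2 + ((2*c*a + s) * ?u x) * y) \<partial>std_normal_distribution) =
      (1 - 2*c) powr (-1/2) * exp (((2*c*a + s) * ?u x)^2 / (2*(1 - 2*c)))" for x
    using assms by (intro nn_integral_exp_quadratic_std_normal) simp
  have complete_square: "?V x + (c*a^2 - r) * (?u x)^2 + ((2*c*a + s) * ?u x)^2 / (2*(1 - 2*c))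
      = ?V x + riccati a s r c * (?u x)^2" for x
    unfolding riccati_def
    by (simp add: power2_eq_square algebra_simps add_divide_distrib diff_divide_distrib)
  have atLeastAtMost_insertL_Suc: "{1..Suc m} = insert (Suc m) {1..m}"
    by auto
  have "exp_moment a s r (Suc m) c = (\<integral>\<^sup>+x. (\<integral>\<^sup>+y.
      exp (chernoff_exponent a s r (x(Suc m := y)) (Suc m) +
        c * (ar_path a (x(Suc m := y)) (Suc m))^2) \<partial>std_normal_distribution) \<partial>innovations_law m)"
    unfolding exp_moment_def atLeastAtMost_insertL_Suc
    by (intro std_normal_product.product_nn_integral_insert
        measurable_compose[OF _ measurable_ennreal] measurable_exp_chernoff_exponent) auto
  also have "\<dots> = (\<integral>\<^sup>+x. exp (?V x + (c*a^2 - r) * (?u x)^2) *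
      (\<integral>\<^sup>+y. exp (c*y^2 + ((2*c*a + s) * ?u x) * y) \<partial>std_normal_distribution) \<partial>innovations_law m)"
    unfolding split exp_add by (simp add: ennreal_mult' nn_integral_cmult)
  also have "\<dots> = (\<integral>\<^sup>+x. (1 - 2*c) powr (-1/2) *
      exp (?V x + riccati a s r c * (?u x)^2) \<partial>innovations_law m)"
    unfolding gauss
    by (simp add: complete_square[symmetric] exp_add ennreal_mult'[symmetric] mult_ac)
  also have "\<dots> = (1 - 2*c) powr (-1/2) * exp_moment a s r m (riccati a s r c)"
    unfolding exp_moment_def
    by (subst nn_integral_cmult[symmetric])
       (auto intro: measurable_exp_chernoff_exponent simp: ennreal_mult)
  finally show ?thesis .
qed

definition riccati_poly :: "real \<Rightarrow> real \<Rightarrow> real \<Rightarrow> real \<Rightarrow> real" where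
  "riccati_poly a s r d = d^2 - (a^2 + 1 + 2*a * s + 2*r) * d + (a + s)^2"

lemma riccati_minus_eq:
  "c < 1/2 \<Longrightarrow> riccati a s r c - c = riccati_poly a s r (1 - 2*c) / (2 * (1 - 2*c))"
  unfolding riccati_def riccati_poly_def by (simp add: field_simps power2_eq_square)

lemma quadratic_le_max_endpoints:
  fixes p q d lo hi :: real
  assumes "lo \<le> d" "d \<le> hi"
  shows "d^2 + p*d + q \<le> max (lo^2 + p*lo + q) (hi^2 + p*hi + q)"
proof (cases "d + lo + p \<le> 0")
  case True
  have "d^2 + p*d + q - (lo^2 + p*lo + q) = (d - lo) * (d + lo + p)"
    by (simp add: algebra_simps power2_eq_square)
  also have "\<dots> \<le> 0"
    using True assms by (intro mult_nonneg_nonpos) auto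
  finally show ?thesis
    by simp
next
  case False
  have "d^2 + p*d + q - (hi^2 + p*hi + q) = (d - hi) * (d + hi + p)"
    by (simp add: algebra_simps power2_eq_square)
  also have "\<dots> \<le> 0"
    using False assms by (intro mult_nonpos_nonneg) auto
  finally show ?thesis
    by simp
qed

lemma exp_moment_Suc_le:
  assumes "c \<le> 0" "riccati a s r c \<le> c'"
  shows "exp_moment a s r (Suc m) c \<le> (1 - 2*c) powr (-1/2) * exp_moment a s r m c'"
  using assms by (simp add: exp_moment_Suc mult_left_mono exp_moment_mono)

text \<open>The sign of \<open>riccati a s r c - c\<close> is that of \<open>riccati_poly a s r (1 - 2*c)\<close>, and a convex
  quadratic that is negative at both ends of \<open>[1, D]\<close> is bounded away from \<open>0\<close> on it.\<close>
lemma riccati_uniform_decrease: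
  assumes "1 < D" "riccati_poly a s r 1 < 0" "riccati_poly a s r D < 0"
  obtains \<delta> where "0 < \<delta>" "\<And>c. (1 - D)/2 \<le> c \<Longrightarrow> c \<le> 0 \<Longrightarrow> riccati a s r c \<le> c - \<delta>"
proof
  define P where "P = max (riccati_poly a s r 1) (riccati_poly a s r D)"
  have "P < 0"
    using assms unfolding P_def by simp
  with \<open>1 < D\<close> show "0 < - P / (2*D)"
    by (simp add: divide_neg_pos)
  fix c assume "(1 - D)/2 \<le> c" "c \<le> 0"
  then have d: "1 \<le> 1 - 2*c" "1 - 2*c \<le> D"
    by simp_all
  have "riccati_poly a s r (1 - 2*c) \<le> P"
    using quadratic_le_max_endpoints[OF d, of "-(a^2 + 1 + 2*a * s + 2*r)" "(a + s)^2"]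
    unfolding P_def riccati_poly_def by (simp add: algebra_simps)
  then have "riccati a s r c - c \<le> P / (2 * (1 - 2*c))"
    using d by (simp add: riccati_minus_eq divide_right_mono)
  also have "\<dots> \<le> P / (2*D)"
    using assms d unfolding P_def by (intro divide_left_mono_neg) auto
  finally show "riccati a s r c \<le> c - - P / (2*D)"
    by simp
qed

text \<open>Iterating \<open>riccati\<close> from \<open>c\<close> reaches the fixed level \<open>(1 - D)/2\<close> after at most \<open>j\<close>
  steps, each contributing a factor at most \<open>1\<close>; every later step contributes \<open>D powr (-1/2)\<close>.\<close>
lemma exp_moment_le_powr:
  assumes "1 < D" "0 < \<delta>"
    and decrease: "\<And>c. (1 - D)/2 \<le> c \<Longrightarrow> c \<le> 0 \<Longrightarrow> riccati a s r c \<le> c - \<delta>"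
    and "(1 - D)/2 \<le> c" "c \<le> 0" "c - real j * \<delta> \<le> (1 - D)/2"
  shows "exp_moment a s r m c \<le> D powr ((real j - real m) / 2)"
  using assms(4-6)
proof (induction m arbitrary: c j)
  case 0
  then show ?case
    using \<open>1 < D\<close> by (simp add: exp_moment_0 ge_one_powr_ge_zero)
next
  case (Suc m)
  define c' where "c' = max ((1 - D)/2) (c - \<delta>)"
  have c': "(1 - D)/2 \<le> c'" "c' \<le> 0"
    using Suc.prems \<open>0 < \<delta>\<close> unfolding c'_def by auto
  have "exp_moment a s r (Suc m) c \<le> (1 - 2*c) powr (-1/2) * exp_moment a s r m c'"
    using decrease[OF Suc.prems(1,2)] Suc.prems(2) unfolding c'_def
    by (intro exp_moment_Suc_le) auto
  also have "\<dots> \<le> D powr ((real j - real (Suc m)) / 2)"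
  proof (cases "c = (1 - D)/2")
    case True
    then have "c' = c"
      using \<open>0 < \<delta>\<close> unfolding c'_def by simp
    then have "exp_moment a s r m c' \<le> D powr ((real j - real m) / 2)"
      using Suc by blast
    moreover have "1 - 2*c = D"
      using True by simp
    ultimately have "(1 - 2*c) powr (-1/2) * exp_moment a s r m c'
        \<le> ennreal (D powr (-1/2)) * ennreal (D powr ((real j - real m) / 2))"
      by (simp add: mult_left_mono)
    also have "\<dots> = D powr ((real j - real (Suc m)) / 2)"
      using \<open>1 < D\<close>
      by (simp add: ennreal_mult'[symmetric] powr_add[symmetric] diff_divide_distrib[symmetric]
          diff_diff_eq add.commute)
    finally show ?thesis .
  next
    case False
    then obtain j' where j: "j = Suc j'"
      using Suc.prems by (cases j) auto
    have "c' - real j' * \<delta> \<le> (1 - D)/2"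
      using Suc.prems \<open>0 < \<delta>\<close> unfolding c'_def j by (auto simp: field_simps max_def)
    then have "exp_moment a s r m c' \<le> D powr ((real j - real (Suc m)) / 2)"
      using Suc.IH[OF c'] unfolding j by simp
    moreover have "(1 - 2*c) powr (-1/2) \<le> 1"
      using Suc.prems by (simp add: powr_minus_divide ge_one_powr_ge_zero)
    ultimately show ?thesis
      using mult_mono[of "ennreal ((1 - 2*c) powr (-1/2))" 1] by (simp add: ennreal_leI)
  qed
  finally show ?case .
qed

lemma exp_moment_decay:
  assumes "1 < D" "riccati_poly a s r 1 < 0" "riccati_poly a s r D < 0"
  obtains C where "0 < C" "\<And>m. exp_moment a s r m 0 \<le> C * D powr (- real m / 2)"
proof -
  obtain \<delta> where "0 < \<delta>" and decrease: "\<And>c. (1 - D)/2 \<le> c \<Longrightarrow> c \<le> 0 \<Longrightarrow> riccati a s r c \<le> c - \<delta>"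
    using riccati_uniform_decrease[OF assms] by blast
  define j where "j = nat \<lceil>(D - 1) / (2*\<delta>)\<rceil>"
  have "(D - 1) / (2*\<delta>) \<le> real j"
    unfolding j_def by linarith
  then have "0 - real j * \<delta> \<le> (1 - D)/2"
    using \<open>0 < \<delta>\<close> by (simp add: field_simps)
  then have "exp_moment a s r m 0 \<le> D powr (real j / 2) * D powr (- real m / 2)" for m
    using exp_moment_le_powr[OF \<open>1 < D\<close> \<open>0 < \<delta>\<close> decrease, of 0 j m] \<open>1 < D\<close>
    by (simp add: powr_add[symmetric] diff_divide_distrib)
  moreover have "0 < D powr (real j / 2)"
    using \<open>1 < D\<close> by simp
  ultimately show ?thesis
    using that by blast
qed

section \<open>Paths with geometric growth\<close>

text \<open>On paths with \<open>ar_path a x i\<close> between \<open>\<kappa>^i\<close> and \<open>2*\<kappa>^i\<close> the estimator lies beyond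
  \<open>\<kappa>/2\<close>, and these paths have positive probability. This shows that the deviation events are
  not null, which the rates need because \<open>ln 0 = 0\<close>.\<close>
definition growth_tube :: "real \<Rightarrow> real \<Rightarrow> nat \<Rightarrow> (nat \<Rightarrow> real) set" where
  "growth_tube a \<kappa> m = {x. \<forall>i\<in>{1..m}. ar_path a x i / \<kappa>^i \<in> {1<..<2}}"

lemma growth_tube_cong:
  "(\<And>j. j \<in> {1..m} \<Longrightarrow> x j = x' j) \<Longrightarrow> x \<in> growth_tube a \<kappa> m \<longleftrightarrow> x' \<in> growth_tube a \<kappa> m"
proof -
  assume "\<And>j. j \<in> {1..m} \<Longrightarrow> x j = x' j"
  then have "ar_path a x i = ar_path a x' i" if "i \<in> {1..m}" for i
    using that by (intro ar_path_cong) auto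
  then show ?thesis
    unfolding growth_tube_def by simp
qed

lemma sets_growth_tube:
  assumes "{1..m} \<subseteq> I"
  shows "{x \<in> space (PiM I (\<lambda>_. std_normal_distribution)). x \<in> growth_tube a \<kappa> m}
    \<in> sets (PiM I (\<lambda>_. std_normal_distribution))"
proof -
  have [measurable]: "(\<lambda>x. ar_path a x i) \<in> borel_measurable (PiM I (\<lambda>_. std_normal_distribution))"
    if "i \<le> m" for i
    using assms that by (intro measurable_ar_path) auto
  show ?thesis
    unfolding growth_tube_def by measurable
qed

lemma abs_ar_path_le_if_growth_tube:
  assumes "\<kappa> \<noteq> 0" "x \<in> growth_tube a \<kappa> m"
  shows "\<bar>ar_path a x m\<bar> \<le> 2 * \<bar>\<kappa>\<bar>^m"
proof (cases m)
  case (Suc k)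
  then have "m \<in> {1..m}"
    by simp
  then have "ar_path a x m / \<kappa>^m \<in> {1<..<2}"
    using assms(2) unfolding growth_tube_def by blast
  then have "\<bar>ar_path a x m / \<kappa>^m\<bar> \<le> 2"
    by (simp only: greaterThanLessThan_iff abs_le_iff) linarith
  with assms(1) show ?thesis
    by (simp add: abs_divide power_abs field_simps)
qed simp

lemma growth_tube_fun_upd_iff:
  assumes "x \<in> growth_tube a \<kappa> m"
  shows "x(Suc m := y) \<in> growth_tube a \<kappa> (Suc m) \<longleftrightarrow>
    (a * ar_path a x m + y) / \<kappa>^Suc m \<in> {1<..<2}"
proof -
  have "{1..Suc m} = insert (Suc m) {1..m}"
    by auto
  moreover have "ar_path a (x(Suc m := y)) i = ar_path a x i" if "i \<in> {1..m}" for i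
    using that by (simp add: ar_path_fun_upd)
  ultimately show ?thesis
    using assms unfolding growth_tube_def
    by (auto simp: ar_path_fun_upd simp del: greaterThanLessThan_iff)
qed

lemma emeasure_growth_tube_slice_ge:
  assumes "\<kappa> \<noteq> 0" "x \<in> growth_tube a \<kappa> m"
  shows "ennreal (\<bar>\<kappa>\<bar>^Suc m * std_normal_density (2*\<bar>\<kappa>\<bar>^Suc m + \<bar>a\<bar> * (2*\<bar>\<kappa>\<bar>^m)))
    \<le> emeasure std_normal_distribution {y. (a * ar_path a x m + y) / \<kappa>^Suc m \<in> {1<..<2}}"
proof -
  let ?u = "ar_path a x m" and ?k = "\<kappa>^Suc m"
  let ?K = "2*\<bar>\<kappa>\<bar>^Suc m + \<bar>a\<bar> * (2*\<bar>\<kappa>\<bar>^m)"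
  define p where "p = min ?k (2*?k) - a*?u"
  define q where "q = max ?k (2*?k) - a*?u"
  have "\<bar>a*?u\<bar> \<le> \<bar>a\<bar> * (2*\<bar>\<kappa>\<bar>^m)"
    using abs_ar_path_le_if_growth_tube[OF assms] by (simp add: abs_mult mult_left_mono)
  moreover have "\<bar>min ?k (2*?k)\<bar> \<le> 2*\<bar>\<kappa>\<bar>^Suc m" "\<bar>max ?k (2*?k)\<bar> \<le> 2*\<bar>\<kappa>\<bar>^Suc m"
    unfolding power_abs[symmetric] by (cases "0 < ?k"; simp)+
  ultimately have p: "\<bar>p\<bar> \<le> ?K" and q: "\<bar>q\<bar> \<le> ?K"
    unfolding p_def q_def by linarith+
  have length: "q - p = \<bar>\<kappa>\<bar>^Suc m"
    unfolding p_def q_def power_abs[symmetric] by (cases "0 < ?k") simp_all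
  moreover have "0 < \<bar>\<kappa>\<bar>^Suc m"
    using assms(1) by simp
  ultimately have "p < q"
    by linarith
  have "{p<..<q} \<subseteq> {y. (a*?u + y) / ?k \<in> {1<..<2}}"
    using assms(1) unfolding p_def q_def
    by (cases "0 < ?k") (auto simp: field_simps zero_less_power_eq)
  then have "emeasure std_normal_distribution {p<..<q}
      \<le> emeasure std_normal_distribution {y. (a*?u + y) / ?k \<in> {1<..<2}}"
    by (intro emeasure_mono) simp_all
  with emeasure_std_normal_interval_ge[OF \<open>p < q\<close> p q] show ?thesis
    unfolding length by simp
qed

lemma nn_integral_growth_tube_fun_upd:
  assumes "x \<in> space (innovations_law m)" "x \<in> growth_tube a \<kappa> m"
  shows "(\<integral>\<^sup>+y. indicator {x \<in> space (innovations_law (Suc m)). x \<in> growth_tube a \<kappa> (Suc m)}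
      (x(Suc m := y)) \<partial>std_normal_distribution)
    = emeasure std_normal_distribution {y. (a * ar_path a x m + y) / \<kappa>^Suc m \<in> {1<..<2}}"
proof -
  have "{1..Suc m} = insert (Suc m) {1..m}"
    by auto
  then have "x(Suc m := y) \<in> space (innovations_law (Suc m))" for y
    using assms(1) unfolding space_PiM by (simp add: PiE_fun_upd)
  then have "(indicator {x \<in> space (innovations_law (Suc m)). x \<in> growth_tube a \<kappa> (Suc m)}
      (x(Suc m := y)) :: ennreal) = indicator {y. (a * ar_path a x m + y) / \<kappa>^Suc m \<in> {1<..<2}} y" for y
    using growth_tube_fun_upd_iff[OF assms(2)] by (auto split: split_indicator)
  then show ?thesis
    by (simp del: greaterThanLessThan_iff)
qed

lemma emeasure_growth_tube_pos:
  assumes "\<kappa> \<noteq> 0"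
  shows "0 < emeasure (innovations_law m) {x \<in> space (innovations_law m). x \<in> growth_tube a \<kappa> m}"
proof (induction m)
  case 0
  show ?case
    by (simp add: PiM_empty growth_tube_def)
next
  case (Suc m)
  let ?G = "\<lambda>m. {x \<in> space (innovations_law m). x \<in> growth_tube a \<kappa> m}"
  define c where "c = \<bar>\<kappa>\<bar>^Suc m * std_normal_density (2*\<bar>\<kappa>\<bar>^Suc m + \<bar>a\<bar> * (2*\<bar>\<kappa>\<bar>^m))"
  have "0 < c"
    using assms unfolding c_def by (simp add: normal_density_pos)
  have insert: "{1..Suc m} = insert (Suc m) {1..m}"
    by auto
  have "0 < ennreal c * emeasure (innovations_law m) (?G m)"
    using \<open>0 < c\<close> Suc.IH by (simp add: ennreal_zero_less_mult_iff)
  also have "\<dots> = (\<integral>\<^sup>+x. ennreal c * indicator (?G m) x \<partial>innovations_law m)"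
    by (rule nn_integral_cmult_indicator[symmetric]) (simp add: sets_growth_tube)
  also have "\<dots> \<le> (\<integral>\<^sup>+x. (\<integral>\<^sup>+y. indicator (?G (Suc m)) (x(Suc m := y))
      \<partial>std_normal_distribution) \<partial>innovations_law m)"
  proof (intro nn_integral_mono)
    fix x assume x: "x \<in> space (innovations_law m)"
    show "ennreal c * indicator (?G m) x
      \<le> (\<integral>\<^sup>+y. indicator (?G (Suc m)) (x(Suc m := y)) \<partial>std_normal_distribution)"
    proof (cases "x \<in> growth_tube a \<kappa> m")
      case True
      with x emeasure_growth_tube_slice_ge[OF assms True] show ?thesis
        unfolding c_def nn_integral_growth_tube_fun_upd[OF x True] by simp
    qed simp
  qed
  also have "\<dots> = (\<integral>\<^sup>+x. indicator (?G (Suc m)) x \<partial>innovations_law (Suc m))"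
    unfolding insert
    by (rule std_normal_product.product_nn_integral_insert[symmetric])
       (auto intro!: borel_measurable_indicator sets_growth_tube)
  also have "\<dots> = emeasure (innovations_law (Suc m)) (?G (Suc m))"
    by (simp add: sets_growth_tube)
  finally show ?case .
qed

lemma growth_tube_summand_pos:
  assumes "\<kappa> \<noteq> 0" "x \<in> growth_tube a \<kappa> n" "i \<in> {1..n-1}"
  shows "0 < \<kappa> * (ar_path a x i * ar_path a x (i+1) - \<kappa>/2 * (ar_path a x i)^2)"
    and "ar_path a x i \<noteq> 0"
proof -
  define w1 where "w1 = ar_path a x i / \<kappa>^i"
  define w2 where "w2 = ar_path a x (i+1) / \<kappa>^(i+1)"
  have "i \<in> {1..n}" "i+1 \<in> {1..n}"
    using assms(3) by auto
  then have "w1 \<in> {1<..<2}" "w2 \<in> {1<..<2}"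
    using assms(2) unfolding growth_tube_def w1_def w2_def by blast+
  then have "1 < w1" "w1 < 2" "1 < w2"
    by simp_all
  moreover have u: "ar_path a x i = \<kappa>^i * w1" "ar_path a x (i+1) = \<kappa>^i * \<kappa> * w2"
    using assms(1) unfolding w1_def w2_def by (simp_all del: ar_path.simps)
  moreover have "\<kappa> * (ar_path a x i * ar_path a x (i+1) - \<kappa>/2 * (ar_path a x i)^2)
      = (\<kappa>^i * \<kappa>)^2 * (w1 * (w2 - w1/2))"
    unfolding u by (simp add: algebra_simps power2_eq_square)
  ultimately show "0 < \<kappa> * (ar_path a x i * ar_path a x (i+1) - \<kappa>/2 * (ar_path a x i)^2)"
    "ar_path a x i \<noteq> 0"
    using assms(1) by (simp_all add: mult_pos_pos)
qed

lemma a_ML_growth_tube: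
  assumes "\<kappa> \<noteq> 0" "x \<in> growth_tube a \<kappa> n" "2 \<le> n"
  shows "0 < \<kappa> * (a_ML (ar_path a x) n - \<kappa>/2)"
proof -
  define A where "A = (\<Sum>i=1..n-1. ar_path a x i * ar_path a x (i+1))"
  define B where "B = (\<Sum>i=1..n-1. (ar_path a x i)^2)"
  have "\<kappa> * (A - \<kappa>/2 * B)
      = (\<Sum>i=1..n-1. \<kappa> * (ar_path a x i * ar_path a x (i+1) - \<kappa>/2 * (ar_path a x i)^2))"
    unfolding A_def B_def by (simp only: right_diff_distrib sum_subtractf sum_distrib_left)
  also have "0 < \<dots>"
    using growth_tube_summand_pos(1)[OF assms(1,2)] assms(3) by (intro sum_pos) auto
  finally have "0 < \<kappa> * (A - \<kappa>/2 * B)" .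
  moreover have "0 < B"
  proof -
    have "1 \<in> {1..n-1}"
      using assms(3) by simp
    then have "0 < (ar_path a x 1)^2"
      using growth_tube_summand_pos(2)[OF assms(1,2)] by (simp del: ar_path.simps)
    with \<open>1 \<in> {1..n-1}\<close> show ?thesis
      unfolding B_def by (intro sum_pos2[of _ 1]) auto
  qed
  ultimately show ?thesis
    unfolding a_ML_def A_def[symmetric] B_def[symmetric]
    by (simp add: field_simps)
qed

section \<open>Admissible tilting parameters\<close>

lemma quadratic_neg_near_zero:
  fixes \<alpha> \<beta> T :: real
  assumes "\<alpha> < 0" "0 < T"
  obtains u where "0 < u" "u < T" "\<alpha> + \<beta>*u + u^2 < 0"
proof
  define u where "u = min (T/2) (min 1 (-\<alpha> / (2*(\<bar>\<beta>\<bar> + 1))))"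
  have "0 < -\<alpha> / (2*(\<bar>\<beta>\<bar> + 1))"
    using assms(1) by (intro divide_pos_pos) auto
  then show "0 < u" "u < T"
    using assms(2) unfolding u_def by auto
  have "u \<le> 1" "u \<le> -\<alpha> / (2*(\<bar>\<beta>\<bar> + 1))"
    unfolding u_def by simp_all
  have "u^2 \<le> u"
    using \<open>0 < u\<close> \<open>u \<le> 1\<close> by (simp add: power2_eq_square mult_left_le)
  moreover have "\<beta>*u \<le> \<bar>\<beta>\<bar>*u"
    using \<open>0 < u\<close> by (simp add: mult_right_mono)
  moreover have "\<bar>\<beta>\<bar>*u + u \<le> -\<alpha>/2"
  proof -
    have "\<bar>\<beta>\<bar>*u + u = (\<bar>\<beta>\<bar> + 1) * u"
      by (simp add: algebra_simps)
    also have "\<dots> \<le> (\<bar>\<beta>\<bar> + 1) * (-\<alpha> / (2*(\<bar>\<beta>\<bar> + 1)))"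
      using \<open>u \<le> -\<alpha> / (2*(\<bar>\<beta>\<bar> + 1))\<close> by (rule mult_left_mono) simp
    also have "\<dots> = -\<alpha>/2"
      by (simp add: field_simps add_pos_nonneg)
    finally show ?thesis .
  qed
  ultimately show "\<alpha> + \<beta>*u + u^2 < 0"
    using assms(1) by linarith
qed

lemma upper_rate_parameter:
  assumes "0 < \<eta>" "1 < D" "D < (a + 2*\<eta>)^2"
  shows "\<exists>t. 0 < t \<and> t < 2*\<eta> \<and> riccati_poly a t (t*\<eta>) D < 0"
proof -
  have "(D - 1) * (D - (a + 2*\<eta>)^2) < 0"
    using assms by (simp add: mult_pos_neg)
  then obtain u where "0 < u" "u < 2*\<eta>"
    and "(D - 1) * (D - (a + 2*\<eta>)^2) + (2*a*D + 2*\<eta>*D - 2*a - 4*\<eta>) * u + u^2 < 0"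
    using quadratic_neg_near_zero[of _ "2*\<eta>"] assms(1) by auto
  moreover have "riccati_poly a (2*\<eta> - u) ((2*\<eta> - u)*\<eta>) D
      = (D - 1) * (D - (a + 2*\<eta>)^2) + (2*a*D + 2*\<eta>*D - 2*a - 4*\<eta>) * u + u^2"
    unfolding riccati_poly_def by (simp add: algebra_simps power2_eq_square)
  ultimately show ?thesis
    by (intro exI[of _ "2*\<eta> - u"]) simp
qed

lemma lower_rate_parameter_small:
  assumes "0 < \<eta>" "1 < D" "D < a^2"
  shows "\<exists>t. 0 < t \<and> t < 2*\<eta> \<and> riccati_poly a (-t) (t*\<eta>) D < 0"
proof -
  have "(D - 1) * (D - a^2) < 0"
    using assms by (simp add: mult_pos_neg)
  then obtain t where "0 < t" "t < 2*\<eta>" "(D - 1) * (D - a^2) + (2*(a - \<eta>)*D - 2*a) * t + t^2 < 0"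
    using quadratic_neg_near_zero[of _ "2*\<eta>"] assms(1) by auto
  moreover have "riccati_poly a (-t) (t*\<eta>) D = (D - 1) * (D - a^2) + (2*(a - \<eta>)*D - 2*a) * t + t^2"
    unfolding riccati_poly_def by (simp add: algebra_simps power2_eq_square)
  ultimately show ?thesis
    by auto
qed

lemma lower_rate_parameter_large:
  assumes "0 < \<eta>" "1 < D" "D < (2*\<eta> - a)^2"
  shows "\<exists>t. 0 < t \<and> t < 2*\<eta> \<and> riccati_poly a (-t) (t*\<eta>) D < 0"
proof -
  have "(D - 1) * (D - (2*\<eta> - a)^2) < 0"
    using assms by (simp add: mult_pos_neg)
  then obtain u where "0 < u" "u < 2*\<eta>"
    and "(D - 1) * (D - (2*\<eta> - a)^2) + (2*a - 4*\<eta> - 2*(a - \<eta>)*D) * u + u^2 < 0"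
    using quadratic_neg_near_zero[of _ "2*\<eta>"] assms(1) by auto
  moreover have "riccati_poly a (-(2*\<eta> - u)) ((2*\<eta> - u)*\<eta>) D
      = (D - 1) * (D - (2*\<eta> - a)^2) + (2*a - 4*\<eta> - 2*(a - \<eta>)*D) * u + u^2"
    unfolding riccati_poly_def by (simp add: algebra_simps power2_eq_square)
  ultimately show ?thesis
    by (intro exI[of _ "2*\<eta> - u"]) simp
qed

lemma quadratic_neg_between_roots:
  fixes a \<eta> :: real
  assumes "\<bar>4*\<eta> - 3*a\<bar> < sqrt (a^2 + 8)"
  shows "2*\<eta>^2 - 3*a*\<eta> + a^2 - 1 < 0"
proof -
  have "\<bar>4*\<eta> - 3*a\<bar>^2 < (sqrt (a^2 + 8))^2"
    using assms by (intro power_strict_mono) auto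
  moreover have "\<bar>4*\<eta> - 3*a\<bar>^2 = 8*(2*\<eta>^2 - 3*a*\<eta> + a^2 - 1) + a^2 + 8"
    by (simp add: power2_eq_square algebra_simps)
  ultimately show ?thesis
    by simp
qed

lemma I_minus_middle_regime:
  assumes "1 < a" "(a^2 - 1)/a < \<eta>" "\<eta> < (3*a + sqrt (a^2 + 8))/4"
  shows "a^2 - 1 < a*\<eta>" "2*\<eta>^2 - 3*a*\<eta> + a^2 - 1 < 0" "(\<eta> - a)^2 < 1"
proof -
  show lower: "a^2 - 1 < a*\<eta>"
    using assms(1,2) by (simp add: field_simps)
  have "(4/a - a)^2 = 16/a^2 - 8 + a^2"
    using assms(1) by (simp add: power2_eq_square field_simps)
  also have "16/a^2 < 16"
    using assms(1) by (simp add: field_simps)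
  finally have "4/a - a < sqrt (a^2 + 8)"
    by (intro real_less_rsqrt) simp
  moreover have "3*a - 4*\<eta> < 4/a - a"
    using lower assms(1) by (simp add: field_simps power2_eq_square)
  moreover have "4*\<eta> - 3*a < sqrt (a^2 + 8)"
    using assms(3) by simp
  ultimately have "\<bar>4*\<eta> - 3*a\<bar> < sqrt (a^2 + 8)"
    unfolding abs_less_iff by linarith
  then show key: "2*\<eta>^2 - 3*a*\<eta> + a^2 - 1 < 0"
    by (rule quadratic_neg_between_roots)
  have "a*(a - 1) = a^2 - a"
    by (simp add: power2_eq_square algebra_simps)
  with lower assms(1) have "a*(a - 1) < a*\<eta>"
    by linarith
  then have "a - 1 < \<eta>"
    using assms(1) by simp
  moreover have "\<eta> < a + 1"
  proof (rule ccontr)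
    assume "\<not> \<eta> < a + 1"
    then have "0 \<le> (\<eta> - a - 1) * (2*\<eta> - a + 1)"
      using assms(1) by (intro mult_nonneg_nonneg) auto
    moreover have "2*\<eta>^2 - 3*a*\<eta> + a^2 - 1 = (\<eta> - a - 1) * (2*\<eta> - a + 1) + \<eta>"
      by (simp add: algebra_simps power2_eq_square)
    ultimately show False
      using key \<open>a - 1 < \<eta>\<close> assms(1) by linarith
  qed
  ultimately show "(\<eta> - a)^2 < 1"
    by (simp add: abs_square_less_1)
qed

lemma affine_between:
  fixes c k x y z :: real
  assumes "x \<le> y" "y \<le> z"
  shows "min (c - k*x) (c - k*z) \<le> c - k*y" "c - k*y \<le> max (c - k*x) (c - k*z)"
proof -
  have "k*x \<le> k*y \<and> k*y \<le> k*z \<or> k*z \<le> k*y \<and> k*y \<le> k*x"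
    using assms by (cases "0 \<le> k") (auto intro: mult_left_mono mult_left_mono_neg)
  then show "min (c - k*x) (c - k*z) \<le> c - k*y" "c - k*y \<le> max (c - k*x) (c - k*z)"
    by linarith+
qed

text \<open>In the middle regime the optimal tilt is \<open>t = a - (a - \<eta>)*D\<close>, at which the Riccati
  polynomial factors as \<open>D * (Q*D - N)\<close>.\<close>
lemma lower_rate_parameter_middle:
  assumes "1 < a" "0 < \<eta>" "(a^2 - 1)/a < \<eta>" "\<eta> < (3*a + sqrt (a^2 + 8))/4"
    and "1 < D" "D < (2*a*\<eta> - (a^2 - 1)) / (1 - (\<eta> - a)^2)"
  shows "\<exists>t. 0 < t \<and> t < 2*\<eta> \<and> riccati_poly a (-t) (t*\<eta>) D < 0"
proof -
  define N where "N = 2*a*\<eta> - (a^2 - 1)"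
  define Q where "Q = 1 - (\<eta> - a)^2"
  note regime = I_minus_middle_regime[OF assms(1,3,4)]
  have "0 < Q"
    using regime(3) unfolding Q_def by simp
  have DN: "D < N/Q"
    using assms(6) unfolding N_def Q_def .
  define t where "t = a - (a - \<eta>)*D"
  define t' where "t' = a - (a - \<eta>)*(N/Q)"
  have "riccati_poly a (-t) (t*\<eta>) D = D * (Q*D - N)"
    unfolding riccati_poly_def t_def Q_def N_def by (simp add: algebra_simps power2_eq_square)
  moreover have "Q*D < N"
    using DN \<open>0 < Q\<close> by (simp add: field_simps)
  ultimately have "riccati_poly a (-t) (t*\<eta>) D < 0"
    using assms(5) by (simp add: mult_pos_neg)
  have t': "t' = \<eta>*(a*\<eta> - (a^2 - 1)) / Q" "2*\<eta> - t' = \<eta>*(-(2*\<eta>^2 - 3*a*\<eta> + a^2 - 1)) / Q"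
    using \<open>0 < Q\<close> unfolding t'_def N_def Q_def by (simp_all add: field_simps power2_eq_square)
  have "0 < t'"
    using regime(1) assms(2) \<open>0 < Q\<close> unfolding t'(1) by (simp add: divide_pos_pos)
  have "0 < 2*\<eta> - t'"
    using regime(2) assms(2) \<open>0 < Q\<close> unfolding t'(2) by (intro divide_pos_pos mult_pos_pos) auto
  then have "t' < 2*\<eta>"
    by simp
  have "min (a - (a - \<eta>)*1) t' \<le> t" "t \<le> max (a - (a - \<eta>)*1) t'"
    using affine_between[of 1 D "N/Q" a "a - \<eta>"] assms(5) DN unfolding t_def t'_def by simp_all
  then have "0 < t \<and> t < 2*\<eta>"
    using \<open>0 < t'\<close> \<open>t' < 2*\<eta>\<close> assms(2) by (simp add: min_le_iff_disj le_max_iff_disj) linarith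
  with \<open>riccati_poly a (-t) (t*\<eta>) D < 0\<close> show ?thesis
    by blast
qed

lemma I_minus_eq_half_ln:
  assumes "1 < a" "0 < \<eta>"
  obtains b where "0 < b" "I_minus a \<eta> = ln b / 2"
    "\<And>D. 1 < D \<Longrightarrow> D < b \<Longrightarrow> \<exists>t. 0 < t \<and> t < 2*\<eta> \<and> riccati_poly a (-t) (t*\<eta>) D < 0"
proof -
  consider (small) "\<eta> \<le> (a^2 - 1)/a"
    | (middle) "(a^2 - 1)/a < \<eta>" "\<eta> < (3*a + sqrt (a^2 + 8))/4"
    | (large) "(a^2 - 1)/a < \<eta>" "(3*a + sqrt (a^2 + 8))/4 \<le> \<eta>"
    by linarith
  then show ?thesis
  proof cases
    case small
    then have "I_minus a \<eta> = ln (a^2) / 2"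
      using assms(1) unfolding I_minus_def Let_def by (simp add: ln_realpow)
    with assms show ?thesis
      using that[of "a^2"] lower_rate_parameter_small by simp
  next
    case middle
    note regime = I_minus_middle_regime[OF assms(1) middle]
    have "0 < a*\<eta>"
      using assms by simp
    with regime have "0 < (2*a*\<eta> - (a^2 - 1)) / (1 - (\<eta> - a)^2)"
      by (intro divide_pos_pos) linarith+
    moreover have "I_minus a \<eta> = ln ((2*a*\<eta> - (a^2 - 1)) / (1 - (\<eta> - a)^2)) / 2"
      using middle unfolding I_minus_def Let_def by simp
    ultimately show ?thesis
      using that lower_rate_parameter_middle[OF assms middle] by blast
  next
    case large
    have "a < sqrt (a^2 + 8)"
      using assms(1) real_sqrt_less_mono[of "a^2" "a^2 + 8"] by simp
    moreover have "3*a + sqrt (a^2 + 8) \<le> 4*\<eta>"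
      using large by simp
    ultimately have "0 < 2*\<eta> - a"
      using assms by linarith
    then have "I_minus a \<eta> = ln ((2*\<eta> - a)^2) / 2"
      using large unfolding I_minus_def Let_def by (simp add: ln_realpow)
    with \<open>0 < 2*\<eta> - a\<close> show ?thesis
      using that[of "(2*\<eta> - a)^2"] lower_rate_parameter_large[OF assms(2)] by simp
  qed
qed

lemma riccati_poly_upper_lt_lower:
  assumes "0 < a" "0 < t" "1 < D"
  shows "riccati_poly a t (t*\<eta>) D < riccati_poly a (-t) (t*\<eta>) D"
proof -
  have "riccati_poly a t (t*\<eta>) D - riccati_poly a (-t) (t*\<eta>) D = - (4*a*t*(D - 1))"
    unfolding riccati_poly_def by (simp add: algebra_simps power2_eq_square)
  moreover have "0 < 4*a*t*(D - 1)"
    using assms by simp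
  ultimately show ?thesis
    by linarith
qed

section \<open>From exponential bounds to rates\<close>

lemma eventually_neg_ln_gt:
  fixes p :: "nat \<Rightarrow> real"
  assumes "\<forall>\<^sub>F n in sequentially. 0 < p n" "\<forall>\<^sub>F n in sequentially. p n \<le> C * exp (- \<rho> * real n)"
    and "y < \<rho>"
  shows "\<forall>\<^sub>F n in sequentially. y < - (1 / real n) * ln (p n)"
proof -
  have "(\<lambda>n. \<rho> - ln C / real n) \<longlonglongrightarrow> \<rho> - 0"
    by (intro tendsto_intros)
  with \<open>y < \<rho>\<close> have "\<forall>\<^sub>F n in sequentially. y < \<rho> - ln C / real n"
    by (simp add: order_tendstoD(1))
  with assms(1,2) eventually_gt_at_top[of 0] show ?thesis
  proof eventually_elim
    case (elim n)
    then have "0 < C * exp (- \<rho> * real n)"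
      by linarith
    then have "0 < C"
      by (simp add: zero_less_mult_iff)
    have "ln (p n) \<le> ln (C * exp (- \<rho> * real n))"
      using elim by (intro ln_mono) auto
    also have "\<dots> = ln C - \<rho> * real n"
      using \<open>0 < C\<close> by (simp add: ln_mult)
    finally have "ln (p n) / real n \<le> (ln C - \<rho> * real n) / real n"
      by (simp add: divide_right_mono)
    also have "\<dots> = ln C / real n - \<rho>"
      using elim by (simp add: diff_divide_distrib)
    finally show ?case
      using elim by simp
  qed
qed

lemma liminf_neg_ln_ge:
  fixes p :: "nat \<Rightarrow> real"
  assumes "\<And>n. p n \<le> 1" "\<forall>\<^sub>F n in sequentially. 0 < p n" "0 < b"
    and bound: "\<And>D. 1 < D \<Longrightarrow> D < b \<Longrightarrow> \<exists>C. \<forall>\<^sub>F n in sequentially. p n \<le> C * D powr (- real n / 2)"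
  shows "ereal (ln b / 2) \<le> liminf (\<lambda>n. ereal (- (1 / real n) * ln (p n)))"
  unfolding le_Liminf_iff
proof (intro allI impI)
  fix y assume "y < ereal (ln b / 2)"
  show "\<forall>\<^sub>F n in sequentially. y < ereal (- (1 / real n) * ln (p n))"
  proof (cases "y < 0")
    case True
    from assms(2) show ?thesis
    proof eventually_elim
      case (elim n)
      then have "0 \<le> - (1 / real n) * ln (p n)"
        using assms(1)[of n] by (simp add: divide_nonpos_nonneg)
      then have "(0::ereal) \<le> ereal (- (1 / real n) * ln (p n))"
        by simp
      with True show ?case
        by (rule less_le_trans)
    qed
  next
    case False
    then obtain y' where y': "y = ereal y'" "0 \<le> y'" "y' < ln b / 2"
      using \<open>y < ereal (ln b / 2)\<close> by (cases y) auto
    define \<rho> where "\<rho> = (y' + ln b / 2) / 2"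
    have "y' < \<rho>" "0 < \<rho>" "2*\<rho> < ln b"
      using y' unfolding \<rho>_def by auto
    then have "1 < exp (2*\<rho>)" "exp (2*\<rho>) < b"
      using \<open>0 < b\<close> exp_less_mono[of "2*\<rho>" "ln b"] by simp_all
    then obtain C where "\<forall>\<^sub>F n in sequentially. p n \<le> C * exp (2*\<rho>) powr (- real n / 2)"
      using bound by blast
    moreover have "exp (2*\<rho>) powr (- real n / 2) = exp (- \<rho> * real n)" for n
      by (simp add: powr_def)
    ultimately have "\<forall>\<^sub>F n in sequentially. y' < - (1 / real n) * ln (p n)"
      using eventually_neg_ln_gt[OF assms(2) _ \<open>y' < \<rho>\<close>] by simp
    with y' show ?thesis
      by simp
  qed
qed

section \<open>Autoregressions driven by standard Gaussian innovations\<close>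

locale gaussian_ar = prob_space M for M :: "'w measure" +
  fixes Z :: "nat \<Rightarrow> 'w \<Rightarrow> real"
  assumes indep_innovations: "indep_vars (\<lambda>_. borel) Z {1..}"
    and std_normal_innovations: "\<And>i. 1 \<le> i \<Longrightarrow> distributed M lborel (Z i) std_normal_density"
begin

abbreviation upper_deviation_event :: "real \<Rightarrow> real \<Rightarrow> nat \<Rightarrow> 'w set" where
  "upper_deviation_event a \<eta> n \<equiv> {\<omega> \<in> space M. a_ML (\<lambda>i. AR_U a Z i \<omega>) n - a > \<eta>}"

abbreviation lower_deviation_event :: "real \<Rightarrow> real \<Rightarrow> nat \<Rightarrow> 'w set" where
  "lower_deviation_event a \<eta> n \<equiv> {\<omega> \<in> space M. a_ML (\<lambda>i. AR_U a Z i \<omega>) n - a < - \<eta>}"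

abbreviation chernoff_event :: "real \<Rightarrow> real \<Rightarrow> real \<Rightarrow> nat \<Rightarrow> 'w set" where
  "chernoff_event a s r n \<equiv> {\<omega> \<in> space M. 0 \<le> chernoff_exponent a s r (\<lambda>i. Z i \<omega>) n}"

lemma measurable_innovation[measurable]: "1 \<le> i \<Longrightarrow> Z i \<in> borel_measurable M"
  using distributed_measurable[OF std_normal_innovations] by simp

lemma measurable_ar_path_innovations[measurable]:
  "(\<lambda>\<omega>. ar_path a (\<lambda>i. Z i \<omega>) i) \<in> borel_measurable M"
  by (induction i) simp_all

lemma measurable_a_ML[measurable]: "(\<lambda>\<omega>. a_ML (\<lambda>i. AR_U a Z i \<omega>) n) \<in> borel_measurable M"
  unfolding a_ML_def AR_U_eq_ar_path by measurable

lemma distr_innovations: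
  assumes "1 \<le> n"
  shows "distr M (PiM {1..n} (\<lambda>_. borel)) (\<lambda>\<omega>. \<lambda>i\<in>{1..n}. Z i \<omega>) = innovations_law n"
proof -
  have "indep_vars (\<lambda>_. borel) Z {1..n}"
    by (rule indep_vars_subset[OF indep_innovations]) auto
  then have "distr M (PiM {1..n} (\<lambda>_. borel)) (\<lambda>\<omega>. \<lambda>i\<in>{1..n}. Z i \<omega>)
      = PiM {1..n} (\<lambda>i. distr M borel (Z i))"
    using indep_vars_iff_distr_eq_PiM'[where I = "{1..n}" and M' = "\<lambda>_. borel" and X = Z] assms
    by simp
  also have "\<dots> = innovations_law n"
  proof (rule PiM_cong)
    fix i assume "i \<in> {1..n}"
    then have "distr M lborel (Z i) = std_normal_distribution"
      using distributed_distr_eq_density[OF std_normal_innovations] by simp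
    then show "distr M borel (Z i) = std_normal_distribution"
      by (metis distr_cong sets_lborel)
  qed simp
  finally show ?thesis .
qed

lemma nn_integral_innovations:
  assumes "1 \<le> n" and [measurable]: "h \<in> borel_measurable (innovations_law n)"
    and local: "\<And>x x'. (\<And>j. j \<in> {1..n} \<Longrightarrow> x j = x' j) \<Longrightarrow> h x = h x'"
  shows "(\<integral>\<^sup>+\<omega>. h (\<lambda>i. Z i \<omega>) \<partial>M) = (\<integral>\<^sup>+x. h x \<partial>innovations_law n)"
proof -
  let ?X = "\<lambda>\<omega>. \<lambda>i\<in>{1..n}. Z i \<omega>"
  have "sets (innovations_law n) = sets (PiM {1..n} (\<lambda>_. borel))"
    by (rule sets_PiM_cong) simp_all
  then have "h \<in> borel_measurable (PiM {1..n} (\<lambda>_. borel))"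
    using assms(2) measurable_cong_sets[of _ _ borel borel] by simp
  moreover have "?X \<in> measurable M (PiM {1..n} (\<lambda>_. borel))"
    by (intro measurable_restrict measurable_innovation) simp
  ultimately have "(\<integral>\<^sup>+\<omega>. h (?X \<omega>) \<partial>M) = (\<integral>\<^sup>+x. h x \<partial>distr M (PiM {1..n} (\<lambda>_. borel)) ?X)"
    by (simp add: nn_integral_distr)
  moreover have "h (\<lambda>i. Z i \<omega>) = h (?X \<omega>)" for \<omega>
    by (rule local) simp
  ultimately show ?thesis
    using distr_innovations[OF assms(1)] by simp
qed

lemma measurable_chernoff_exponent_innovations[measurable]:
  "(\<lambda>\<omega>. chernoff_exponent a s r (\<lambda>i. Z i \<omega>) n) \<in> borel_measurable M"
  unfolding chernoff_exponent_def by measurable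

text \<open>Markov's inequality for \<open>exp\<close> of the exponent.\<close>
lemma emeasure_chernoff_event_le:
  assumes "1 \<le> n"
  shows "emeasure M (chernoff_event a s r n) \<le> exp_moment a s r n 0"
proof -
  let ?V = "\<lambda>x. chernoff_exponent a s r x n"
  have "emeasure M (chernoff_event a s r n) = (\<integral>\<^sup>+\<omega>. indicator (chernoff_event a s r n) \<omega> \<partial>M)"
    by simp
  also have "\<dots> \<le> (\<integral>\<^sup>+\<omega>. exp (?V (\<lambda>i. Z i \<omega>)) \<partial>M)"
    by (intro nn_integral_mono) (simp split: split_indicator)
  also have "\<dots> = (\<integral>\<^sup>+x. exp (?V x) \<partial>innovations_law n)"
  proof (rule nn_integral_innovations[OF assms])
    show "(\<lambda>x. ennreal (exp (?V x))) \<in> borel_measurable (innovations_law n)"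
      using measurable_compose[OF measurable_exp_chernoff_exponent[of n "{1..n}" a s r 0]
          measurable_ennreal]
      by simp
  qed (metis chernoff_exponent_cong)
  also have "\<dots> = exp_moment a s r n 0"
    by (simp add: exp_moment_def)
  finally show ?thesis .
qed

lemma chernoff_tail_bound:
  assumes "1 < D" "riccati_poly a s r 1 < 0" "riccati_poly a s r D < 0"
  obtains C where "\<forall>\<^sub>F n in sequentially. prob (chernoff_event a s r n) \<le> C * D powr (- real n / 2)"
proof -
  obtain C where "0 < C" and C: "\<And>n. exp_moment a s r n 0 \<le> C * D powr (- real n / 2)"
    using exp_moment_decay[OF assms] by blast
  have bound: "prob (chernoff_event a s r n) \<le> C * D powr (- real n / 2)" if "1 \<le> n" for n
    using order_trans[OF emeasure_chernoff_event_le[OF that] C] \<open>0 < C\<close>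
    by (simp add: emeasure_eq_measure)
  show ?thesis
    using eventually_ge_at_top[of 1] by (rule that[OF eventually_mono]) (rule bound)
qed

lemma sets_growth_tube_innovations[measurable]:
  "{\<omega> \<in> space M. (\<lambda>i. Z i \<omega>) \<in> growth_tube a \<kappa> n} \<in> sets M"
  unfolding growth_tube_def by measurable

lemma prob_growth_tube_pos:
  assumes "\<kappa> \<noteq> 0" "1 \<le> n"
  shows "0 < prob {\<omega> \<in> space M. (\<lambda>i. Z i \<omega>) \<in> growth_tube a \<kappa> n}"
proof -
  let ?G = "{x \<in> space (innovations_law n). x \<in> growth_tube a \<kappa> n}"
  have G: "?G \<in> sets (innovations_law n)"
    using sets_growth_tube[of n "{1..n}"] by simp
  have "0 < emeasure (innovations_law n) ?G"
    using emeasure_growth_tube_pos[OF assms(1)] .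
  also have "\<dots> = (\<integral>\<^sup>+x. indicator ?G x \<partial>innovations_law n)"
    using G by simp
  also have "\<dots> = (\<integral>\<^sup>+x. indicator (growth_tube a \<kappa> n) x \<partial>innovations_law n)"
    by (intro nn_integral_cong) (simp split: split_indicator)
  also have "\<dots> = (\<integral>\<^sup>+\<omega>. indicator (growth_tube a \<kappa> n) (\<lambda>i. Z i \<omega>) \<partial>M)"
  proof (rule nn_integral_innovations[symmetric, OF assms(2)])
    show "indicator (growth_tube a \<kappa> n) \<in> borel_measurable (innovations_law n)"
      using G
      by (intro borel_measurable_indicator'[where A = "\<lambda>_. growth_tube a \<kappa> n" and f = "\<lambda>x. x"]) simp
    show "indicator (growth_tube a \<kappa> n) x = (indicator (growth_tube a \<kappa> n) x' :: ennreal)"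
      if "\<And>j. j \<in> {1..n} \<Longrightarrow> x j = x' j" for x x'
      using growth_tube_cong[OF that] by (simp split: split_indicator)
  qed
  also have "\<dots> = (\<integral>\<^sup>+\<omega>. indicator {\<omega> \<in> space M. (\<lambda>i. Z i \<omega>) \<in> growth_tube a \<kappa> n} \<omega> \<partial>M)"
    by (intro nn_integral_cong) (simp split: split_indicator)
  also have "\<dots> = emeasure M {\<omega> \<in> space M. (\<lambda>i. Z i \<omega>) \<in> growth_tube a \<kappa> n}"
    by simp
  finally show ?thesis
    by (simp add: emeasure_eq_measure)
qed

lemma upper_deviation_bound:
  assumes "0 < t" "t < 2*\<eta>" "1 < D" "riccati_poly a t (t*\<eta>) D < 0"
  obtains C where "\<forall>\<^sub>F n in sequentially. prob (upper_deviation_event a \<eta> n) \<le> C * D powr (- real n / 2)"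
proof -
  have "riccati_poly a t (t*\<eta>) 1 = t * (t - 2*\<eta>)"
    unfolding riccati_poly_def by (simp add: algebra_simps power2_eq_square)
  with assms(1,2) have "riccati_poly a t (t*\<eta>) 1 < 0"
    by (simp add: mult_pos_neg)
  then obtain C where C: "\<forall>\<^sub>F n in sequentially.
      prob (chernoff_event a t (t*\<eta>) n) \<le> C * D powr (- real n / 2)"
    using chernoff_tail_bound[OF assms(3) _ assms(4)] by blast
  have "upper_deviation_event a \<eta> n \<subseteq> chernoff_event a t (t*\<eta>) n" for n
  proof safe
    fix \<omega> assume "\<eta> < a_ML (\<lambda>i. AR_U a Z i \<omega>) n - a"
    with assms(1) have "0 \<le> t * (a_ML (ar_path a (\<lambda>i. Z i \<omega>)) n - (a + \<eta>))"
      by (simp add: AR_U_eq_ar_path)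
    from chernoff_exponent_nonneg_if_ratio[OF this]
    show "0 \<le> chernoff_exponent a t (t*\<eta>) (\<lambda>i. Z i \<omega>) n"
      by simp
  qed
  then have le: "prob (upper_deviation_event a \<eta> n)
      \<le> prob (chernoff_event a t (t*\<eta>) n)" for n
    by (intro finite_measure_mono) simp_all
  from C have "\<forall>\<^sub>F n in sequentially. prob (upper_deviation_event a \<eta> n) \<le> C * D powr (- real n / 2)"
    by eventually_elim (rule order_trans[OF le])
  then show ?thesis
    by (rule that)
qed

lemma lower_deviation_bound:
  assumes "0 < t" "t < 2*\<eta>" "1 < D" "riccati_poly a (-t) (t*\<eta>) D < 0"
  obtains C where "\<forall>\<^sub>F n in sequentially. prob (lower_deviation_event a \<eta> n) \<le> C * D powr (- real n / 2)"
proof -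
  have "riccati_poly a (-t) (t*\<eta>) 1 = t * (t - 2*\<eta>)"
    unfolding riccati_poly_def by (simp add: algebra_simps power2_eq_square)
  with assms(1,2) have "riccati_poly a (-t) (t*\<eta>) 1 < 0"
    by (simp add: mult_pos_neg)
  then obtain C where C: "\<forall>\<^sub>F n in sequentially.
      prob (chernoff_event a (-t) (t*\<eta>) n) \<le> C * D powr (- real n / 2)"
    using chernoff_tail_bound[OF assms(3) _ assms(4)] by blast
  have "lower_deviation_event a \<eta> n \<subseteq> chernoff_event a (-t) (t*\<eta>) n" for n
  proof safe
    fix \<omega> assume "a_ML (\<lambda>i. AR_U a Z i \<omega>) n - a < - \<eta>"
    then have "a_ML (ar_path a (\<lambda>i. Z i \<omega>)) n - (a - \<eta>) \<le> 0"
      by (simp add: AR_U_eq_ar_path)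
    with assms(1) have "0 \<le> -t * (a_ML (ar_path a (\<lambda>i. Z i \<omega>)) n - (a - \<eta>))"
      by (simp add: mult_nonneg_nonpos)
    from chernoff_exponent_nonneg_if_ratio[OF this]
    show "0 \<le> chernoff_exponent a (-t) (t*\<eta>) (\<lambda>i. Z i \<omega>) n"
      by simp
  qed
  then have le: "prob (lower_deviation_event a \<eta> n)
      \<le> prob (chernoff_event a (-t) (t*\<eta>) n)" for n
    by (intro finite_measure_mono) simp_all
  from C have "\<forall>\<^sub>F n in sequentially. prob (lower_deviation_event a \<eta> n) \<le> C * D powr (- real n / 2)"
    by eventually_elim (rule order_trans[OF le])
  then show ?thesis
    by (rule that)
qed

text \<open>A tilt admissible for the lower tail is admissible for the upper tail as well.\<close>
lemma two_sided_deviation_bound: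
  assumes "0 < a" "0 < t" "t < 2*\<eta>" "1 < D" "riccati_poly a (-t) (t*\<eta>) D < 0"
  obtains C where "\<forall>\<^sub>F n in sequentially.
    prob (upper_deviation_event a \<eta> n \<union> lower_deviation_event a \<eta> n) \<le> C * D powr (- real n / 2)"
proof -
  have "riccati_poly a t (t*\<eta>) D < 0"
    using riccati_poly_upper_lt_lower[of a t D \<eta>] assms by simp
  obtain C\<^sub>1 where "\<forall>\<^sub>F n in sequentially. prob (upper_deviation_event a \<eta> n) \<le> C\<^sub>1 * D powr (- real n / 2)"
    using upper_deviation_bound[OF assms(2-4) \<open>riccati_poly a t (t*\<eta>) D < 0\<close>] by blast
  moreover obtain C\<^sub>2 where "\<forall>\<^sub>F n in sequentially. prob (lower_deviation_event a \<eta> n) \<le> C\<^sub>2 * D powr (- real n / 2)"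
    using lower_deviation_bound[OF assms(2-5)] by blast
  ultimately have "\<forall>\<^sub>F n in sequentially.
      prob (upper_deviation_event a \<eta> n \<union> lower_deviation_event a \<eta> n) \<le> (C\<^sub>1 + C\<^sub>2) * D powr (- real n / 2)"
  proof eventually_elim
    case (elim n)
    have "prob (upper_deviation_event a \<eta> n \<union> lower_deviation_event a \<eta> n)
        \<le> prob (upper_deviation_event a \<eta> n) + prob (lower_deviation_event a \<eta> n)"
      by (rule measure_Un_le) simp_all
    with elim show ?case
      by (simp add: distrib_right)
  qed
  then show ?thesis
    by (rule that)
qed

lemma upper_deviation_pos:
  assumes "1 < a" "0 < \<eta>" "2 \<le> n"
  shows "0 < prob (upper_deviation_event a \<eta> n)"
proof -
  let ?\<kappa> = "2*(a + \<eta> + 1)"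
  have "{\<omega> \<in> space M. (\<lambda>i. Z i \<omega>) \<in> growth_tube a ?\<kappa> n} \<subseteq> upper_deviation_event a \<eta> n"
  proof safe
    fix \<omega> assume "(\<lambda>i. Z i \<omega>) \<in> growth_tube a ?\<kappa> n"
    then have "0 < ?\<kappa> * (a_ML (ar_path a (\<lambda>i. Z i \<omega>)) n - ?\<kappa>/2)"
      using assms by (intro a_ML_growth_tube) auto
    with assms show "\<eta> < a_ML (\<lambda>i. AR_U a Z i \<omega>) n - a"
      unfolding AR_U_eq_ar_path by (simp add: zero_less_mult_iff)
  qed
  then have "prob {\<omega> \<in> space M. (\<lambda>i. Z i \<omega>) \<in> growth_tube a ?\<kappa> n} \<le> prob (upper_deviation_event a \<eta> n)"
    by (intro finite_measure_mono) simp_all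
  moreover have "0 < prob {\<omega> \<in> space M. (\<lambda>i. Z i \<omega>) \<in> growth_tube a ?\<kappa> n}"
    using assms by (intro prob_growth_tube_pos) auto
  ultimately show ?thesis
    by linarith
qed

lemma lower_deviation_pos:
  assumes "2 \<le> n"
  shows "0 < prob (lower_deviation_event a \<eta> n)"
proof -
  let ?\<kappa> = "- 2*\<bar>a - \<eta>\<bar> - 2"
  have "?\<kappa> < 0" "?\<kappa>/2 < a - \<eta>"
    by (simp_all add: abs_if)
  have "{\<omega> \<in> space M. (\<lambda>i. Z i \<omega>) \<in> growth_tube a ?\<kappa> n} \<subseteq> lower_deviation_event a \<eta> n"
  proof safe
    fix \<omega> assume "(\<lambda>i. Z i \<omega>) \<in> growth_tube a ?\<kappa> n"
    then have "0 < ?\<kappa> * (a_ML (ar_path a (\<lambda>i. Z i \<omega>)) n - ?\<kappa>/2)"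
      using assms \<open>?\<kappa> < 0\<close> by (intro a_ML_growth_tube) auto
    with \<open>?\<kappa> < 0\<close> have "a_ML (ar_path a (\<lambda>i. Z i \<omega>)) n < ?\<kappa>/2"
      by (simp add: zero_less_mult_iff)
    with \<open>?\<kappa>/2 < a - \<eta>\<close> show "a_ML (\<lambda>i. AR_U a Z i \<omega>) n - a < - \<eta>"
      unfolding AR_U_eq_ar_path by simp
  qed
  then have "prob {\<omega> \<in> space M. (\<lambda>i. Z i \<omega>) \<in> growth_tube a ?\<kappa> n} \<le> prob (lower_deviation_event a \<eta> n)"
    by (intro finite_measure_mono) simp_all
  moreover have "0 < prob {\<omega> \<in> space M. (\<lambda>i. Z i \<omega>) \<in> growth_tube a ?\<kappa> n}"
    using assms \<open>?\<kappa> < 0\<close> by (intro prob_growth_tube_pos) auto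
  ultimately show ?thesis
    by linarith
qed

lemma upper_deviation_rate:
  assumes "1 < a" "0 < \<eta>"
  shows "ereal (ln (a + 2*\<eta>)) \<le>
    liminf (\<lambda>n. ereal (- (1 / real n) * ln (prob (upper_deviation_event a \<eta> n))))"
proof -
  have rate: "ln (a + 2*\<eta>) = ln ((a + 2*\<eta>)^2) / 2"
    using assms by (simp add: ln_realpow)
  show ?thesis
    unfolding rate
  proof (rule liminf_neg_ln_ge)
    show "\<forall>\<^sub>F n in sequentially. 0 < prob (upper_deviation_event a \<eta> n)"
      using eventually_ge_at_top[of 2] by eventually_elim (rule upper_deviation_pos[OF assms])
    fix D assume "1 < D" "D < (a + 2*\<eta>)^2"
    then obtain t where t: "0 < t" "t < 2*\<eta>" "riccati_poly a t (t*\<eta>) D < 0"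
      using upper_rate_parameter[OF assms(2)] by blast
    show "\<exists>C. \<forall>\<^sub>F n in sequentially. prob (upper_deviation_event a \<eta> n) \<le> C * D powr (- real n / 2)"
      using upper_deviation_bound[OF t(1,2) \<open>1 < D\<close> t(3)] by blast
  qed (use assms in simp_all)
qed

lemma lower_deviation_rate:
  assumes "1 < a" "0 < \<eta>"
  shows "ereal (I_minus a \<eta>) \<le>
    liminf (\<lambda>n. ereal (- (1 / real n) * ln (prob (lower_deviation_event a \<eta> n))))"
proof -
  obtain b where "0 < b" "I_minus a \<eta> = ln b / 2" and admissible:
    "\<And>D. 1 < D \<Longrightarrow> D < b \<Longrightarrow> \<exists>t. 0 < t \<and> t < 2*\<eta> \<and> riccati_poly a (-t) (t*\<eta>) D < 0"
    using I_minus_eq_half_ln[OF assms] by blast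
  show ?thesis
    unfolding \<open>I_minus a \<eta> = ln b / 2\<close>
  proof (rule liminf_neg_ln_ge)
    show "\<forall>\<^sub>F n in sequentially. 0 < prob (lower_deviation_event a \<eta> n)"
      using eventually_ge_at_top[of 2] by eventually_elim (rule lower_deviation_pos)
    fix D assume "1 < D" "D < b"
    then obtain t where t: "0 < t" "t < 2*\<eta>" "riccati_poly a (-t) (t*\<eta>) D < 0"
      using admissible by blast
    show "\<exists>C. \<forall>\<^sub>F n in sequentially. prob (lower_deviation_event a \<eta> n) \<le> C * D powr (- real n / 2)"
      using lower_deviation_bound[OF t(1,2) \<open>1 < D\<close> t(3)] by blast
  qed (use \<open>0 < b\<close> in simp_all)
qed

lemma two_sided_deviation_rate:
  assumes "1 < a" "0 < \<eta>"
  shows "ereal (I_minus a \<eta>) \<le> liminf (\<lambda>n. ereal (- (1 / real n) *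
    ln (prob {\<omega> \<in> space M. \<bar>a_ML (\<lambda>i. AR_U a Z i \<omega>) n - a\<bar> > \<eta>})))"
proof -
  have split: "{\<omega> \<in> space M. \<bar>a_ML (\<lambda>i. AR_U a Z i \<omega>) n - a\<bar> > \<eta>}
      = upper_deviation_event a \<eta> n \<union> lower_deviation_event a \<eta> n" for n
    by auto
  obtain b where "0 < b" "I_minus a \<eta> = ln b / 2" and admissible:
    "\<And>D. 1 < D \<Longrightarrow> D < b \<Longrightarrow> \<exists>t. 0 < t \<and> t < 2*\<eta> \<and> riccati_poly a (-t) (t*\<eta>) D < 0"
    using I_minus_eq_half_ln[OF assms] by blast
  show ?thesis
    unfolding \<open>I_minus a \<eta> = ln b / 2\<close> split
  proof (rule liminf_neg_ln_ge)
    show "\<forall>\<^sub>F n in sequentially. 0 < prob (upper_deviation_event a \<eta> n \<union> lower_deviation_event a \<eta> n)"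
      using eventually_ge_at_top[of 2]
    proof eventually_elim
      case (elim n)
      have "prob (upper_deviation_event a \<eta> n)
          \<le> prob (upper_deviation_event a \<eta> n \<union> lower_deviation_event a \<eta> n)"
        by (intro finite_measure_mono) auto
      with upper_deviation_pos[OF assms elim] show ?case
        by linarith
    qed
    fix D assume "1 < D" "D < b"
    then obtain t where t: "0 < t" "t < 2*\<eta>" "riccati_poly a (-t) (t*\<eta>) D < 0"
      using admissible by blast
    have "0 < a"
      using assms(1) by simp
    show "\<exists>C. \<forall>\<^sub>F n in sequentially.
        prob (upper_deviation_event a \<eta> n \<union> lower_deviation_event a \<eta> n) \<le> C * D powr (- real n / 2)"
      using two_sided_deviation_bound[OF \<open>0 < a\<close> t(1,2) \<open>1 < D\<close> t(3)] by blast
  qed (use \<open>0 < b\<close> in simp_all)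
qed

end

lemma AR_U_divide: "AR_U a (\<lambda>j \<omega>. Z j \<omega> / c) i \<omega> = AR_U a Z i \<omega> / c"
  by (induction i) (simp_all add: add_divide_distrib)

lemma a_ML_divide:
  assumes "c \<noteq> 0"
  shows "a_ML (\<lambda>i. u i / c) n = a_ML u n"
proof -
  have "(\<Sum>i=1..n-1. u i / c * (u (i+1) / c)) = (\<Sum>i=1..n-1. u i * u (i+1)) / c^2"
    by (simp add: sum_divide_distrib power2_eq_square)
  moreover have "(\<Sum>i=1..n-1. (u i / c)^2) = (\<Sum>i=1..n-1. (u i)^2) / c^2"
    by (simp add: sum_divide_distrib power_divide)
  ultimately show ?thesis
    using assms unfolding a_ML_def by simp
qed

theorem theorem2:
  fixes M :: "'w measure" and Z :: "nat \<Rightarrow> 'w \<Rightarrow> real"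
    and \<sigma> a \<eta> :: real
  assumes "prob_space M"
    and "\<sigma> > 0" and "a > 1" and "\<eta> > 0"
    and "prob_space.indep_vars M (\<lambda>_. borel) Z {1..}"
    and "\<And>i. i \<ge> 1 \<Longrightarrow> distributed M lborel (Z i) (normal_density 0 \<sigma>)"
  shows "(liminf (\<lambda>n. ereal (- (1 / real n) * ln (measure M
            {\<omega>\<in>space M. a_ML (\<lambda>i. AR_U a Z i \<omega>) n - a > \<eta>})))
           \<ge> ereal (ln (a + 2*\<eta>))) \<and>
         (liminf (\<lambda>n. ereal (- (1 / real n) * ln (measure M
            {\<omega>\<in>space M. a_ML (\<lambda>i. AR_U a Z i \<omega>) n - a < - \<eta>})))
           \<ge> ereal (I_minus a \<eta>)) \<and>
         (liminf (\<lambda>n. ereal (- (1 / real n) * ln (measure M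
            {\<omega>\<in>space M. \<bar>a_ML (\<lambda>i. AR_U a Z i \<omega>) n - a\<bar> > \<eta>})))
           \<ge> ereal (I_minus a \<eta>))"
proof -
  interpret prob_space M
    by (rule assms(1))
  interpret normalised: gaussian_ar M "\<lambda>i \<omega>. Z i \<omega> / \<sigma>"
  proof
    show "indep_vars (\<lambda>_. borel) (\<lambda>i \<omega>. Z i \<omega> / \<sigma>) {1..}"
      using assms(5) by (rule indep_vars_compose2[where Y = "\<lambda>_ z. z / \<sigma>"]) simp
    show "distributed M lborel (\<lambda>\<omega>. Z i \<omega> / \<sigma>) std_normal_density" if "1 \<le> i" for i
      using assms(6)[OF that] normal_standard_normal_convert[OF assms(2), of "Z i" 0] by simp
  qed
  have "a_ML (\<lambda>i. AR_U a (\<lambda>j \<omega>. Z j \<omega> / \<sigma>) i \<omega>) n = a_ML (\<lambda>i. AR_U a Z i \<omega>) n" for n \<omega>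
    using assms(2) by (simp add: AR_U_divide a_ML_divide)
  then show ?thesis
    using normalised.upper_deviation_rate[OF assms(3,4)]
      normalised.lower_deviation_rate[OF assms(3,4)] normalised.two_sided_deviation_rate[OF assms(3,4)]
    by simp
qed

end
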